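(* Let $\mathcal M_{AI}$ be the category whose objects are countable discrete metric spaces of bounded geometry and whose morphisms are almost isometries. Then $f\mapsto M_{d_f}$ is a functor from $\mathcal M_{AI}$ to $\mathcal M$: for almost isometries $f:X\to Y$, $g:Y\to Z$ between bounded geometry spaces, $M_{d_{g\circ f}}(X,Z)=M_{d_f}(X,Y)\hat\otimes M_{d_g}(Y,Z)=M_{d_g\circ d_f}(X,Z)$, and $M_{d_{\mathrm{id}_X}}(X,X)=C^*_u(X)$.
   Context: Bounded geometry: for every $R>0$ the number of points in balls of radius $R$ is finite and uniformly bounded. An almost isometry $f:X\to Y$ satisfies $d_X(x,x')-C\le d_Y(f(x),f(x'))\le d_X(x,x')+C$ for some $C>0$; $d_f$ is the metric on $X\sqcup Y$ extending $d_X,d_Y$ with $d_f(x,y)=\inf_{\tilde x\in X}(d_X(x,\tilde x)+C/2+d_Y(f(\tilde x),y))$. $\mathcal M$ is the category whose objects are countable discrete metric spaces and whose morphisms $X\to Y$ are the spaces $M_d(X,Y)$, $d$ a metric on $X\sqcup Y$ extending $d_X,d_Y$, where $M_d(X,Y)$ is the norm closure in $\mathbb B(l^2(X),l^2(Y))$ of bounded operators $T$ of finite propagation (i.e. $\langle T\delta_x,\delta_y\rangle=0$ whenever $d(x,y)\ge L$, for some $L$); composition is $(M_{d_1}(X,Y),M_{d_2}(Y,Z))\mapsto M_{d_2\circ d_1}(X,Z)$, with $(d_2\circ d_1)(x,z)=\inf_y(d_1(x,y)+d_2(y,z))$. $M\hat\otimes N$ is the norm closure of the span of compositions $S\circ T$,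 $T\in M$, $S\in N$. $C^*_u(X)$ is the uniform Roe algebra (norm closure of finite-propagation bounded operators on $l^2(X)$). *)

theory Defs
  imports "HOL-Analysis.Analysis"
begin

definition metric_on :: "'a set \<Rightarrow> ('a \<Rightarrow> 'a \<Rightarrow> real) \<Rightarrow> bool" where
  "metric_on S d \<longleftrightarrow>
     (\<forall>x\<in>S. \<forall>y\<in>S. 0 \<le> d x y \<and> (d x y = 0 \<longleftrightarrow> x = y) \<and> d x y = d y x) \<and>
     (\<forall>x\<in>S. \<forall>y\<in>S. \<forall>z\<in>S. d x z \<le> d x y + d y z)"

definition countable_discrete_metric :: "'a set \<Rightarrow> ('a \<Rightarrow> 'a \<Rightarrow> real) \<Rightarrow> bool" where
  "countable_discrete_metric S d \<longleftrightarrow> metric_on S d \<and> countable S \<and>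
     (\<forall>x\<in>S. \<exists>e>0. \<forall>y\<in>S. d x y < e \<longrightarrow> y = x)"

definition bounded_geometry :: "'a set \<Rightarrow> ('a \<Rightarrow> 'a \<Rightarrow> real) \<Rightarrow> bool" where
  "bounded_geometry S d \<longleftrightarrow>
     (\<forall>R>0. \<exists>N::nat. \<forall>x\<in>S. finite {y\<in>S. d x y \<le> R} \<and> card {y\<in>S. d x y \<le> R} \<le> N)"

definition almost_isometry ::
  "'a set \<Rightarrow> ('a \<Rightarrow> 'a \<Rightarrow> real) \<Rightarrow> 'b set \<Rightarrow> ('b \<Rightarrow> 'b \<Rightarrow> real) \<Rightarrow> real \<Rightarrow> ('a \<Rightarrow> 'b) \<Rightarrow> bool" where
  "almost_isometry X dX Y dY C f \<longleftrightarrow> C > 0 \<and> f ` X \<subseteq> Y \<and>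
     (\<forall>x\<in>X. \<forall>x'\<in>X. dX x x' - C \<le> dY (f x) (f x') \<and> dY (f x) (f x') \<le> dX x x' + C)"

text \<open>The metric d_f on the disjoint union X \<squnion> Y (modelled by the sum type).\<close>
fun dist_f ::
  "'a set \<Rightarrow> ('a \<Rightarrow> 'a \<Rightarrow> real) \<Rightarrow> ('b \<Rightarrow> 'b \<Rightarrow> real) \<Rightarrow> real \<Rightarrow> ('a \<Rightarrow> 'b)
    \<Rightarrow> 'a + 'b \<Rightarrow> 'a + 'b \<Rightarrow> real" where
  "dist_f X dX dY C f (Inl x) (Inl x') = dX x x'"
| "dist_f X dX dY C f (Inr y) (Inr y') = dY y y'"
| "dist_f X dX dY C f (Inl x) (Inr y) = (INF x'\<in>X. dX x x' + C / 2 + dY (f x') y)"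
| "dist_f X dX dY C f (Inr y) (Inl x) = (INF x'\<in>X. dX x x' + C / 2 + dY (f x') y)"

fun metric_comp ::
  "'b set \<Rightarrow> ('a + 'b \<Rightarrow> 'a + 'b \<Rightarrow> real) \<Rightarrow> ('b + 'c \<Rightarrow> 'b + 'c \<Rightarrow> real)
    \<Rightarrow> 'a + 'c \<Rightarrow> 'a + 'c \<Rightarrow> real" where
  "metric_comp Y d1 d2 (Inl x) (Inl x') = d1 (Inl x) (Inl x')"
| "metric_comp Y d1 d2 (Inr z) (Inr z') = d2 (Inr z) (Inr z')"
| "metric_comp Y d1 d2 (Inl x) (Inr z) = (INF y\<in>Y. d1 (Inl x) (Inr y) + d2 (Inl y) (Inr z))"
| "metric_comp Y d1 d2 (Inr z) (Inl x) = (INF y\<in>Y. d1 (Inl x) (Inr y) + d2 (Inl y) (Inr z))"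

definition l2 :: "'a set \<Rightarrow> ('a \<Rightarrow> complex) set" where
  "l2 X = {v. (\<forall>x. x \<notin> X \<longrightarrow> v x = 0) \<and> (\<lambda>x. (cmod (v x))\<^sup>2) summable_on X}"

definition l2norm :: "'a set \<Rightarrow> ('a \<Rightarrow> complex) \<Rightarrow> real" where
  "l2norm X v = sqrt (\<Sum>\<^sub>\<infinity>x\<in>X. (cmod (v x))\<^sup>2)"

definition bounded_op :: "'a set \<Rightarrow> 'b set \<Rightarrow> (('a \<Rightarrow> complex) \<Rightarrow> ('b \<Rightarrow> complex)) \<Rightarrow> bool" where
  "bounded_op X Y T \<longleftrightarrow>
     (\<forall>v\<in>l2 X. T v \<in> l2 Y) \<and>
     (\<forall>v. v \<notin> l2 X \<longrightarrow> T v = (\<lambda>_. 0)) \<and>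
     (\<forall>u\<in>l2 X. \<forall>v\<in>l2 X. \<forall>a b. T (\<lambda>x. a * u x + b * v x) = (\<lambda>y. a * T u y + b * T v y)) \<and>
     (\<exists>K. \<forall>v\<in>l2 X. l2norm Y (T v) \<le> K * l2norm X v)"

definition opnorm :: "'a set \<Rightarrow> 'b set \<Rightarrow> (('a \<Rightarrow> complex) \<Rightarrow> ('b \<Rightarrow> complex)) \<Rightarrow> real" where
  "opnorm X Y T = (SUP v\<in>{v\<in>l2 X. l2norm X v \<le> 1}. l2norm Y (T v))"

definition op_closure ::
  "'a set \<Rightarrow> 'b set \<Rightarrow> (('a \<Rightarrow> complex) \<Rightarrow> ('b \<Rightarrow> complex)) set
    \<Rightarrow> (('a \<Rightarrow> complex) \<Rightarrow> ('b \<Rightarrow> complex)) set" where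
  "op_closure X Y A = {T. bounded_op X Y T \<and>
      (\<forall>e>0. \<exists>S\<in>A. opnorm X Y (\<lambda>v y. T v y - S v y) < e)}"

text \<open>Delta function and matrix coefficient <T \<delta>_x, \<delta>_y> = (T \<delta>_x)(y).\<close>
definition delta :: "'a \<Rightarrow> 'a \<Rightarrow> complex" where
  "delta x = (\<lambda>x'. if x' = x then 1 else 0)"

definition finite_propagation ::
  "'a set \<Rightarrow> 'b set \<Rightarrow> ('a + 'b \<Rightarrow> 'a + 'b \<Rightarrow> real) \<Rightarrow> (('a \<Rightarrow> complex) \<Rightarrow> ('b \<Rightarrow> complex)) \<Rightarrow> bool" where
  "finite_propagation X Y d T \<longleftrightarrow>
     (\<exists>L. \<forall>x\<in>X. \<forall>y\<in>Y. d (Inl x) (Inr y) \<ge> L \<longrightarrow> T (delta x) y = 0)"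

definition M_d ::
  "'a set \<Rightarrow> 'b set \<Rightarrow> ('a + 'b \<Rightarrow> 'a + 'b \<Rightarrow> real) \<Rightarrow> (('a \<Rightarrow> complex) \<Rightarrow> ('b \<Rightarrow> complex)) set" where
  "M_d X Y d = op_closure X Y {T. bounded_op X Y T \<and> finite_propagation X Y d T}"

definition uniform_roe :: "'a set \<Rightarrow> ('a \<Rightarrow> 'a \<Rightarrow> real) \<Rightarrow> (('a \<Rightarrow> complex) \<Rightarrow> ('a \<Rightarrow> complex)) set" where
  "uniform_roe X dX = op_closure X X {T. bounded_op X X T \<and>
     (\<exists>L. \<forall>x\<in>X. \<forall>x'\<in>X. dX x x' \<ge> L \<longrightarrow> T (delta x) x' = 0)}"

definition op_span :: "(('a \<Rightarrow> complex) \<Rightarrow> ('b \<Rightarrow> complex)) set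
    \<Rightarrow> (('a \<Rightarrow> complex) \<Rightarrow> ('b \<Rightarrow> complex)) set" where
  "op_span A = {T. \<exists>(n::nat) (c::nat \<Rightarrow> complex) B. (\<forall>i<n. B i \<in> A) \<and>
                    T = (\<lambda>v y. \<Sum>i<n. c i * B i v y)}"

definition hat_otimes ::
  "'a set \<Rightarrow> 'c set \<Rightarrow> (('a \<Rightarrow> complex) \<Rightarrow> ('b \<Rightarrow> complex)) set
    \<Rightarrow> (('b \<Rightarrow> complex) \<Rightarrow> ('c \<Rightarrow> complex)) set \<Rightarrow> (('a \<Rightarrow> complex) \<Rightarrow> ('c \<Rightarrow> complex)) set" where
  "hat_otimes X Z M N = op_closure X Z (op_span {(\<lambda>v. S (T v)) | S T. T \<in> M \<and> S \<in> N})"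

end

theory Submission
  imports Defs
begin

(* Moving a metric on the disjoint union by a bounded amount does not change which operators
   have finite propagation. The metrics d_(g o f) and d_g o d_f differ by a bounded amount, and
   so do d_id and d_X; hence it remains to show M_(d_(g o f)) = M_(d_f) hat-tensor M_(d_g).

   A composite S T of finite propagation operators has finite propagation: bounded geometry of Y
   makes T delta_x finitely supported, so <S T delta_x, delta_z> is a finite sum over intermediate
   points y, each term of which vanishes when d_g o d_f (x, z) is large.

   Conversely, bounded geometry of X bounds the fibres of f, so X splits into finitely many
   pieces X_i on which f is injective. A finite propagation operator P is the finite sum of the
   composites (P o pull_i) o push_i, where push_i transports functions on X_i to f(X_i) and
   pull_i transports them back; both factors have finite propagation. Passing to norm closures,
   which are stable under sums and compositions, gives the equality. *)

lemma l2_zero [simp]: "(\<lambda>_. 0) \<in> l2 X"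
  by (simp add: l2_def)

lemma l2_outside: "v \<in> l2 X \<Longrightarrow> x \<notin> X \<Longrightarrow> v x = 0"
  by (simp add: l2_def)

lemma l2_summable: "v \<in> l2 X \<Longrightarrow> (\<lambda>x. (cmod (v x))\<^sup>2) summable_on X"
  by (simp add: l2_def)

lemma l2norm_nonneg: "l2norm X v \<ge> 0"
  by (simp add: l2norm_def infsum_nonneg)

lemma l2norm_zero [simp]: "l2norm X (\<lambda>_. 0) = 0"
  by (simp add: l2norm_def)

lemma L2_set_le_l2norm:
  assumes "v \<in> l2 X" "finite F" "F \<subseteq> X"
  shows "L2_set (\<lambda>x. cmod (v x)) F \<le> l2norm X v"
proof -
  have "(\<Sum>x\<in>F. (cmod (v x))\<^sup>2) = (\<Sum>\<^sub>\<infinity>x\<in>F. (cmod (v x))\<^sup>2)"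
    using assms(2) by simp
  also have "\<dots> \<le> (\<Sum>\<^sub>\<infinity>x\<in>X. (cmod (v x))\<^sup>2)"
    by (rule infsum_mono_neutral) (use assms l2_summable in auto)
  finally show ?thesis
    unfolding L2_set_def l2norm_def by simp
qed

lemma l2_lincomb:
  assumes u: "u \<in> l2 X" and v: "v \<in> l2 X"
  shows "(\<lambda>x. a * u x + b * v x) \<in> l2 X"
    and "l2norm X (\<lambda>x. a * u x + b * v x) \<le> cmod a * l2norm X u + cmod b * l2norm X v"
proof -
  let ?B = "cmod a * l2norm X u + cmod b * l2norm X v"
  have finite_sums: "(\<Sum>x\<in>F. (cmod (a * u x + b * v x))\<^sup>2) \<le> ?B\<^sup>2"
    if "finite F" "F \<subseteq> X" for F
  proof -
    have "L2_set (\<lambda>x. cmod (a * u x + b * v x)) F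
        \<le> L2_set (\<lambda>x. cmod a * cmod (u x) + cmod b * cmod (v x)) F"
      by (rule L2_set_mono) (auto intro: norm_triangle_le simp: norm_mult)
    also have "\<dots> \<le> cmod a * L2_set (\<lambda>x. cmod (u x)) F + cmod b * L2_set (\<lambda>x. cmod (v x)) F"
      using L2_set_triangle_ineq by (simp add: L2_set_right_distrib)
    also have "\<dots> \<le> ?B"
      using L2_set_le_l2norm[OF u that] L2_set_le_l2norm[OF v that]
      by (intro add_mono mult_left_mono) auto
    finally have "(L2_set (\<lambda>x. cmod (a * u x + b * v x)) F)\<^sup>2 \<le> ?B\<^sup>2"
      by (rule power_mono[OF _ L2_set_nonneg])
    thus ?thesis
      by (simp add: L2_set_def sum_nonneg)
  qed
  have summable: "(\<lambda>x. (cmod (a * u x + b * v x))\<^sup>2) summable_on X"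
    by (rule nonneg_bdd_above_summable_on) (auto intro!: bdd_aboveI[where M="?B\<^sup>2"] finite_sums)
  show "(\<lambda>x. a * u x + b * v x) \<in> l2 X"
    using u v summable by (auto simp: l2_def)
  have "(\<Sum>\<^sub>\<infinity>x\<in>X. (cmod (a * u x + b * v x))\<^sup>2) \<le> ?B\<^sup>2"
    by (rule infsum_le_finite_sums[OF summable finite_sums])
  moreover have "?B \<ge> 0"
    by (simp add: l2norm_nonneg)
  ultimately show "l2norm X (\<lambda>x. a * u x + b * v x) \<le> ?B"
    unfolding l2norm_def[of X "\<lambda>x. a * u x + b * v x"] by (rule real_le_lsqrt[rotated])
qed

lemma l2_scale: "u \<in> l2 X \<Longrightarrow> (\<lambda>x. c * u x) \<in> l2 X"
  using l2_lincomb(1)[of u X u c 0] by simp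

lemma l2norm_scale: "u \<in> l2 X \<Longrightarrow> l2norm X (\<lambda>x. c * u x) \<le> cmod c * l2norm X u"
  using l2_lincomb(2)[of u X u c 0] by simp

lemma l2_sum: "finite F \<Longrightarrow> (\<And>i. i \<in> F \<Longrightarrow> u i \<in> l2 X) \<Longrightarrow> (\<lambda>x. \<Sum>i\<in>F. c i * u i x) \<in> l2 X"
proof (induction F rule: finite_induct)
  case (insert i F)
  then show ?case
    using l2_lincomb(1)[of "u i" X "\<lambda>x. \<Sum>i\<in>F. c i * u i x" "c i" 1] by simp
qed simp

lemma l2norm_eq_0D:
  assumes v: "v \<in> l2 X" and "l2norm X v = 0"
  shows "v = (\<lambda>_. 0)"
proof
  fix x
  show "v x = 0"
  proof (cases "x \<in> X")
    case True
    have "(\<Sum>\<^sub>\<infinity>x\<in>X. (cmod (v x))\<^sup>2) \<le> 0"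
      using \<open>l2norm X v = 0\<close> by (simp add: l2norm_def)
    from nonneg_infsum_le_0D[OF this l2_summable[OF v] _ True] show ?thesis
      by simp
  qed (use l2_outside[OF v] in simp)
qed

lemma delta_l2:
  assumes "x \<in> X"
  shows "delta x \<in> l2 X"
proof -
  have "(\<lambda>y. (cmod (delta x y))\<^sup>2) summable_on {x}"
    by simp
  then have "(\<lambda>y. (cmod (delta x y))\<^sup>2) summable_on X"
    by (rule summable_on_cong_neutral[THEN iffD1, rotated -1]) (use assms in \<open>auto simp: delta_def\<close>)
  with assms show ?thesis
    by (auto simp: l2_def delta_def)
qed

lemma bounded_op_l2: "bounded_op X Y T \<Longrightarrow> v \<in> l2 X \<Longrightarrow> T v \<in> l2 Y"
  by (simp add: bounded_op_def)

lemma bounded_op_outside: "bounded_op X Y T \<Longrightarrow> v \<notin> l2 X \<Longrightarrow> T v = (\<lambda>_. 0)"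
  by (simp add: bounded_op_def)

lemma bounded_op_linear:
  "bounded_op X Y T \<Longrightarrow> u \<in> l2 X \<Longrightarrow> v \<in> l2 X \<Longrightarrow>
     T (\<lambda>x. a * u x + b * v x) = (\<lambda>y. a * T u y + b * T v y)"
  unfolding bounded_op_def by blast

lemma bounded_opE:
  assumes "bounded_op X Y T"
  obtains K where "K \<ge> 0" "\<And>v. v \<in> l2 X \<Longrightarrow> l2norm Y (T v) \<le> K * l2norm X v"
proof -
  obtain K where K: "\<forall>v\<in>l2 X. l2norm Y (T v) \<le> K * l2norm X v"
    using assms unfolding bounded_op_def by blast
  have "K * l2norm X v \<le> max K 0 * l2norm X v" for v
    by (rule mult_right_mono) (auto simp: l2norm_nonneg)
  with K show ?thesis
    by (intro that[of "max K 0"]) (auto intro: order_trans)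
qed

lemma bounded_op_apply_zero: "bounded_op X Y T \<Longrightarrow> T (\<lambda>_. 0) = (\<lambda>_. 0)"
  using bounded_op_linear[of X Y T "\<lambda>_. 0" "\<lambda>_. 0" 0 0] by simp

lemma bounded_op_scale: "bounded_op X Y T \<Longrightarrow> u \<in> l2 X \<Longrightarrow> T (\<lambda>x. c * u x) = (\<lambda>y. c * T u y)"
  using bounded_op_linear[of X Y T u u c 0] by simp

lemma bounded_op_diff:
  "bounded_op X Y T \<Longrightarrow> u \<in> l2 X \<Longrightarrow> v \<in> l2 X \<Longrightarrow> T (\<lambda>x. u x - v x) = (\<lambda>y. T u y - T v y)"
  using bounded_op_linear[of X Y T u v 1 "-1"] by simp

lemma bounded_op_sum:
  assumes T: "bounded_op X Y T"
  shows "finite F \<Longrightarrow> (\<And>i. i \<in> F \<Longrightarrow> u i \<in> l2 X) \<Longrightarrow>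
           T (\<lambda>x. \<Sum>i\<in>F. c i * u i x) = (\<lambda>y. \<Sum>i\<in>F. c i * T (u i) y)"
proof (induction F rule: finite_induct)
  case (insert i F)
  have "T (\<lambda>x. c i * u i x + 1 * (\<Sum>i\<in>F. c i * u i x))
      = (\<lambda>y. c i * T (u i) y + 1 * T (\<lambda>x. \<Sum>i\<in>F. c i * u i x) y)"
    using bounded_op_linear[OF T, of "u i" "\<lambda>x. \<Sum>i\<in>F. c i * u i x" "c i" 1] insert.prems
      l2_sum[OF insert.hyps(1), of u X c] by simp
  with insert show ?case
    by simp
qed (simp add: bounded_op_apply_zero[OF T])

lemma opnorm_bdd_above:
  assumes "bounded_op X Y T"
  shows "bdd_above ((\<lambda>v. l2norm Y (T v)) ` {v\<in>l2 X. l2norm X v \<le> 1})"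
proof -
  obtain K where K: "K \<ge> 0" "\<And>v. v \<in> l2 X \<Longrightarrow> l2norm Y (T v) \<le> K * l2norm X v"
    using bounded_opE[OF assms] by blast
  have "l2norm Y (T v) \<le> K" if "v \<in> l2 X" "l2norm X v \<le> 1" for v
    using K(2)[OF that(1)] mult_left_mono[OF that(2) K(1)] by simp
  thus ?thesis
    by (intro bdd_aboveI2) auto
qed

lemma l2norm_le_opnorm:
  assumes T: "bounded_op X Y T" and v: "v \<in> l2 X" and "l2norm X v \<le> 1"
  shows "l2norm Y (T v) \<le> opnorm X Y T"
  unfolding opnorm_def by (rule cSUP_upper[OF _ opnorm_bdd_above[OF T]]) (use assms in simp)

lemma opnorm_nonneg: "bounded_op X Y T \<Longrightarrow> opnorm X Y T \<ge> 0"
  using l2norm_le_opnorm[of X Y T "\<lambda>_. 0"] by (simp add: bounded_op_apply_zero)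

lemma opnorm_leI:
  assumes "B \<ge> 0" "\<And>v. v \<in> l2 X \<Longrightarrow> l2norm Y (T v) \<le> B * l2norm X v"
  shows "opnorm X Y T \<le> B"
  unfolding opnorm_def
proof (rule cSUP_least)
  show "{v \<in> l2 X. l2norm X v \<le> 1} \<noteq> {}"
    using l2_zero[of X] l2norm_zero[of X] by fastforce
  fix v assume "v \<in> {v \<in> l2 X. l2norm X v \<le> 1}"
  then show "l2norm Y (T v) \<le> B"
    using assms(2)[of v] mult_left_mono[of "l2norm X v" 1 B] assms(1) by auto
qed

lemma opnorm_bound:
  assumes T: "bounded_op X Y T" and v: "v \<in> l2 X"
  shows "l2norm Y (T v) \<le> opnorm X Y T * l2norm X v"
proof (cases "l2norm X v = 0")
  case True
  then show ?thesis
    using l2norm_eq_0D[OF v] bounded_op_apply_zero[OF T] by simp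
next
  case False
  define n where "n = l2norm X v"
  have n: "n > 0"
    using False l2norm_nonneg[of X v] unfolding n_def by linarith
  define w where "w = (\<lambda>x. complex_of_real (1 / n) * v x)"
  have w: "w \<in> l2 X"
    unfolding w_def by (rule l2_scale[OF v])
  have "l2norm X w \<le> 1"
    using l2norm_scale[OF v, of "complex_of_real (1 / n)"] n by (simp add: w_def n_def norm_divide)
  then have Tw: "l2norm Y (T w) \<le> opnorm X Y T"
    by (rule l2norm_le_opnorm[OF T w])
  have "T v = (\<lambda>y. complex_of_real n * T w y)"
    using bounded_op_scale[OF T w, of "complex_of_real n"] n by (simp add: w_def)
  then have "l2norm Y (T v) \<le> n * l2norm Y (T w)"
    using l2norm_scale[OF bounded_op_l2[OF T w], of "complex_of_real n"] n by simp
  also have "\<dots> \<le> n * opnorm X Y T"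
    using n Tw by simp
  finally show ?thesis
    by (simp add: n_def mult.commute)
qed

lemma l2norm_lincomb_ops_le:
  assumes T: "bounded_op X Y T" and S: "bounded_op X Y S" and v: "v \<in> l2 X"
  shows "l2norm Y (\<lambda>y. a * T v y + b * S v y)
           \<le> (cmod a * opnorm X Y T + cmod b * opnorm X Y S) * l2norm X v"
proof -
  have "l2norm Y (\<lambda>y. a * T v y + b * S v y) \<le> cmod a * l2norm Y (T v) + cmod b * l2norm Y (S v)"
    by (rule l2_lincomb(2)[OF bounded_op_l2[OF T v] bounded_op_l2[OF S v]])
  also have "\<dots> \<le> cmod a * (opnorm X Y T * l2norm X v) + cmod b * (opnorm X Y S * l2norm X v)"
    by (intro add_mono mult_left_mono opnorm_bound T S v) auto
  finally show ?thesis
    by (simp add: algebra_simps)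
qed

lemma bounded_op_lincomb:
  assumes T: "bounded_op X Y T" and S: "bounded_op X Y S"
  shows "bounded_op X Y (\<lambda>v y. a * T v y + b * S v y)"
  unfolding bounded_op_def
proof (intro conjI ballI allI impI)
  fix v assume "v \<in> l2 X"
  then show "(\<lambda>y. a * T v y + b * S v y) \<in> l2 Y"
    using l2_lincomb(1) bounded_op_l2 T S by blast
next
  fix v assume "v \<notin> l2 X"
  then show "(\<lambda>y. a * T v y + b * S v y) = (\<lambda>_. 0)"
    using bounded_op_outside[OF T] bounded_op_outside[OF S] by simp
next
  fix u v a' b' assume "u \<in> l2 X" "v \<in> l2 X"
  then show "(\<lambda>y. a * T (\<lambda>x. a' * u x + b' * v x) y + b * S (\<lambda>x. a' * u x + b' * v x) y) =
             (\<lambda>y. a' * (a * T u y + b * S u y) + b' * (a * T v y + b * S v y))"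
    by (simp add: bounded_op_linear[OF T] bounded_op_linear[OF S] algebra_simps)
next
  show "\<exists>K. \<forall>v\<in>l2 X. l2norm Y (\<lambda>y. a * T v y + b * S v y) \<le> K * l2norm X v"
    using l2norm_lincomb_ops_le[OF T S] by blast
qed

lemma opnorm_lincomb_le:
  assumes T: "bounded_op X Y T" and S: "bounded_op X Y S"
  shows "opnorm X Y (\<lambda>v y. a * T v y + b * S v y) \<le> cmod a * opnorm X Y T + cmod b * opnorm X Y S"
  by (rule opnorm_leI) (auto intro!: l2norm_lincomb_ops_le T S simp: opnorm_nonneg T S)

lemma bounded_op_minus:
  "bounded_op X Y T \<Longrightarrow> bounded_op X Y S \<Longrightarrow> bounded_op X Y (\<lambda>v y. T v y - S v y)"
  using bounded_op_lincomb[of X Y T S 1 "-1"] by simp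

lemma bounded_op_compose:
  assumes T: "bounded_op X Y T" and S: "bounded_op Y Z S"
  shows "bounded_op X Z (\<lambda>v. S (T v))"
  unfolding bounded_op_def
proof (intro conjI ballI allI impI)
  fix v assume "v \<in> l2 X"
  then show "S (T v) \<in> l2 Z"
    using bounded_op_l2[OF S bounded_op_l2[OF T]] by blast
next
  fix v assume "v \<notin> l2 X"
  then show "S (T v) = (\<lambda>_. 0)"
    using bounded_op_outside[OF T] bounded_op_apply_zero[OF S] by simp
next
  fix u v a b assume "u \<in> l2 X" "v \<in> l2 X"
  then show "S (T (\<lambda>x. a * u x + b * v x)) = (\<lambda>y. a * S (T u) y + b * S (T v) y)"
    by (simp add: bounded_op_linear[OF T] bounded_op_linear[OF S] bounded_op_l2[OF T])
next
  have "l2norm Z (S (T v)) \<le> (opnorm Y Z S * opnorm X Y T) * l2norm X v" if "v \<in> l2 X" for v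
    using opnorm_bound[OF S bounded_op_l2[OF T that]]
      mult_left_mono[OF opnorm_bound[OF T that] opnorm_nonneg[OF S]]
    by (simp add: mult.assoc)
  then show "\<exists>K. \<forall>v\<in>l2 X. l2norm Z (S (T v)) \<le> K * l2norm X v"
    by blast
qed

lemma opnorm_compose_le:
  assumes T: "bounded_op X Y T" and S: "bounded_op Y Z S"
  shows "opnorm X Z (\<lambda>v. S (T v)) \<le> opnorm Y Z S * opnorm X Y T"
proof (rule opnorm_leI)
  show "0 \<le> opnorm Y Z S * opnorm X Y T"
    using opnorm_nonneg[OF T] opnorm_nonneg[OF S] by simp
  fix v assume v: "v \<in> l2 X"
  show "l2norm Z (S (T v)) \<le> opnorm Y Z S * opnorm X Y T * l2norm X v"
    using opnorm_bound[OF S bounded_op_l2[OF T v]]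
      mult_left_mono[OF opnorm_bound[OF T v] opnorm_nonneg[OF S]]
    by (simp add: mult.assoc)
qed

lemma bounded_op_zero: "bounded_op X Y (\<lambda>v y. 0)"
  unfolding bounded_op_def by (auto intro!: exI[of _ 0])

lemma opnorm_zero [simp]: "opnorm X Y (\<lambda>v y. 0) = 0"
  unfolding opnorm_def using l2_zero[of X] l2norm_zero[of X] by (subst cSUP_const) fastforce+

section \<open>Norm closures of spaces of operators\<close>

definition op_subspace :: "'a set \<Rightarrow> 'b set \<Rightarrow> (('a \<Rightarrow> complex) \<Rightarrow> ('b \<Rightarrow> complex)) set \<Rightarrow> bool" where
  "op_subspace X Y A \<longleftrightarrow> (\<forall>T\<in>A. bounded_op X Y T) \<and> (\<lambda>v y. 0) \<in> A \<and>
     (\<forall>T\<in>A. \<forall>S\<in>A. \<forall>a b. (\<lambda>v y. a * T v y + b * S v y) \<in> A)"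

lemma op_closure_bounded: "T \<in> op_closure X Y A \<Longrightarrow> bounded_op X Y T"
  by (simp add: op_closure_def)

lemma op_closure_approx:
  assumes "T \<in> op_closure X Y A" "e > 0"
  obtains S where "S \<in> A" "opnorm X Y (\<lambda>v y. T v y - S v y) < e"
  using assms by (auto simp: op_closure_def)

lemma subset_op_closure:
  assumes "\<And>T. T \<in> A \<Longrightarrow> bounded_op X Y T"
  shows "A \<subseteq> op_closure X Y A"
proof
  fix T assume "T \<in> A"
  then have "opnorm X Y (\<lambda>v y. T v y - T v y) < e \<and> T \<in> A" if "e > 0" for e
    using that by simp
  with assms \<open>T \<in> A\<close> show "T \<in> op_closure X Y A"
    unfolding op_closure_def by blast
qed

lemma op_closure_mono: "A \<subseteq> B \<Longrightarrow> op_closure X Y A \<subseteq> op_closure X Y B"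
  unfolding op_closure_def by blast

lemma opnorm_minus_triangle:
  assumes "bounded_op X Y T" "bounded_op X Y S" "bounded_op X Y R"
  shows "opnorm X Y (\<lambda>v y. T v y - R v y)
           \<le> opnorm X Y (\<lambda>v y. T v y - S v y) + opnorm X Y (\<lambda>v y. S v y - R v y)"
  using opnorm_lincomb_le[OF bounded_op_minus[of X Y T S] bounded_op_minus[of X Y S R], of 1 1] assms
  by simp

lemma op_closure_idem:
  assumes "\<And>T. T \<in> A \<Longrightarrow> bounded_op X Y T"
  shows "op_closure X Y (op_closure X Y A) = op_closure X Y A"
proof
  show "op_closure X Y (op_closure X Y A) \<subseteq> op_closure X Y A"
  proof
    fix T assume T: "T \<in> op_closure X Y (op_closure X Y A)"
    have "\<exists>R\<in>A. opnorm X Y (\<lambda>v y. T v y - R v y) < e" if "e > 0" for e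
    proof -
      obtain S where S: "S \<in> op_closure X Y A" "opnorm X Y (\<lambda>v y. T v y - S v y) < e / 2"
        using op_closure_approx[OF T, of "e / 2"] \<open>e > 0\<close> by auto
      obtain R where R: "R \<in> A" "opnorm X Y (\<lambda>v y. S v y - R v y) < e / 2"
        using op_closure_approx[OF S(1), of "e / 2"] \<open>e > 0\<close> by auto
      have "opnorm X Y (\<lambda>v y. T v y - R v y) < e"
        using opnorm_minus_triangle[OF op_closure_bounded[OF T] op_closure_bounded[OF S(1)] assms[OF R(1)]]
          S(2) R(2) by simp
      with R(1) show ?thesis
        by blast
    qed
    with op_closure_bounded[OF T] show "T \<in> op_closure X Y A"
      by (simp add: op_closure_def)
  qed
  show "op_closure X Y A \<subseteq> op_closure X Y (op_closure X Y A)"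
    by (rule subset_op_closure) (rule op_closure_bounded)
qed

lemma op_closure_lincomb:
  assumes A: "op_subspace X Y A" and T: "T \<in> op_closure X Y A" and S: "S \<in> op_closure X Y A"
  shows "(\<lambda>v y. a * T v y + b * S v y) \<in> op_closure X Y A"
proof -
  have "\<exists>R\<in>A. opnorm X Y (\<lambda>v y. (a * T v y + b * S v y) - R v y) < e" if "e > 0" for e
  proof -
    have pos: "cmod a + cmod b + 1 > 0"
      by (simp add: add_nonneg_pos)
    define d where "d = e / (cmod a + cmod b + 1)"
    have d: "d > 0" "(cmod a + cmod b + 1) * d = e"
      using \<open>e > 0\<close> pos by (simp_all add: d_def)
    obtain T' where T': "T' \<in> A" "opnorm X Y (\<lambda>v y. T v y - T' v y) < d"
      using op_closure_approx[OF T d(1)] .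
    obtain S' where S': "S' \<in> A" "opnorm X Y (\<lambda>v y. S v y - S' v y) < d"
      using op_closure_approx[OF S d(1)] .
    have bounded: "bounded_op X Y T'" "bounded_op X Y S'"
      using A T'(1) S'(1) by (auto simp: op_subspace_def)
    have "(\<lambda>v y. (a * T v y + b * S v y) - (a * T' v y + b * S' v y))
        = (\<lambda>v y. a * (T v y - T' v y) + b * (S v y - S' v y))"
      by (simp add: algebra_simps)
    then have "opnorm X Y (\<lambda>v y. (a * T v y + b * S v y) - (a * T' v y + b * S' v y))
        \<le> cmod a * opnorm X Y (\<lambda>v y. T v y - T' v y) + cmod b * opnorm X Y (\<lambda>v y. S v y - S' v y)"
      using opnorm_lincomb_le[OF bounded_op_minus[OF op_closure_bounded[OF T] bounded(1)]
          bounded_op_minus[OF op_closure_bounded[OF S] bounded(2)]]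
      by simp
    also have "\<dots> \<le> cmod a * d + cmod b * d"
      using T'(2) S'(2) by (intro add_mono mult_left_mono) auto
    also have "\<dots> < e"
      using d by (simp add: algebra_simps)
    finally show ?thesis
      using A T'(1) S'(1) by (intro bexI[of _ "\<lambda>v y. a * T' v y + b * S' v y"]) (auto simp: op_subspace_def)
  qed
  then show ?thesis
    using bounded_op_lincomb[OF op_closure_bounded[OF T] op_closure_bounded[OF S]]
    by (simp add: op_closure_def)
qed

lemma op_span_subset_op_closure:
  assumes A: "op_subspace X Y A"
  shows "op_span (op_closure X Y A) \<subseteq> op_closure X Y A"
proof
  have sum_in: "(\<lambda>v y. \<Sum>i<n. c i * B i v y) \<in> op_closure X Y A"
    if "\<forall>i<n. B i \<in> op_closure X Y A" for n :: nat and c B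
    using that
  proof (induction n)
    case 0
    then show ?case
      using A subset_op_closure[of A X Y] by (auto simp: op_subspace_def)
  next
    case (Suc n)
    then have "(\<lambda>v y. \<Sum>i<n. c i * B i v y) \<in> op_closure X Y A" "B n \<in> op_closure X Y A"
      by simp_all
    from op_closure_lincomb[OF A this, of 1 "c n"] show ?case
      by simp
  qed
  fix T assume "T \<in> op_span (op_closure X Y A)"
  then show "T \<in> op_closure X Y A"
    unfolding op_span_def using sum_in by blast
qed

lemma op_span_mono: "A \<subseteq> B \<Longrightarrow> op_span A \<subseteq> op_span B"
  unfolding op_span_def by blast

lemma opnorm_compose_minus_le:
  assumes T: "bounded_op X Y T" and T': "bounded_op X Y T'"
    and S: "bounded_op Y Z S" and S': "bounded_op Y Z S'"
  shows "opnorm X Z (\<lambda>v z. S (T v) z - S' (T' v) z)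
           \<le> opnorm Y Z S * opnorm X Y (\<lambda>v y. T v y - T' v y)
             + opnorm Y Z (\<lambda>w z. S w z - S' w z) * opnorm X Y T'"
proof -
  have DT: "bounded_op X Y (\<lambda>v y. T v y - T' v y)" and DS: "bounded_op Y Z (\<lambda>w z. S w z - S' w z)"
    using bounded_op_minus T T' S S' by blast+
  have "(\<lambda>v z. S (T v) z - S' (T' v) z)
      = (\<lambda>v z. 1 * S (\<lambda>y. T v y - T' v y) z + 1 * (S (T' v) z - S' (T' v) z))"
  proof (intro ext)
    fix v z
    show "S (T v) z - S' (T' v) z = 1 * S (\<lambda>y. T v y - T' v y) z + 1 * (S (T' v) z - S' (T' v) z)"
    proof (cases "v \<in> l2 X")
      case True
      then show ?thesis
        using bounded_op_diff[OF S bounded_op_l2[OF T True] bounded_op_l2[OF T' True]] by simp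
    next
      case False
      then show ?thesis
        using bounded_op_outside[OF T] bounded_op_outside[OF T'] bounded_op_apply_zero[OF S] by simp
    qed
  qed
  then have "opnorm X Z (\<lambda>v z. S (T v) z - S' (T' v) z)
      \<le> opnorm X Z (\<lambda>v. S (\<lambda>y. T v y - T' v y)) + opnorm X Z (\<lambda>v z. S (T' v) z - S' (T' v) z)"
    using opnorm_lincomb_le[OF bounded_op_compose[OF DT S] bounded_op_compose[OF T' DS], of 1 1] by simp
  also have "\<dots> \<le> opnorm Y Z S * opnorm X Y (\<lambda>v y. T v y - T' v y)
             + opnorm Y Z (\<lambda>w z. S w z - S' w z) * opnorm X Y T'"
    using opnorm_compose_le[OF DT S] opnorm_compose_le[OF T' DS] by simp
  finally show ?thesis .
qed

lemma op_closure_compose: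
  assumes A1: "\<And>T. T \<in> A1 \<Longrightarrow> bounded_op X Y T" and A2: "\<And>S. S \<in> A2 \<Longrightarrow> bounded_op Y Z S"
    and A3: "\<And>T S. T \<in> A1 \<Longrightarrow> S \<in> A2 \<Longrightarrow> (\<lambda>v. S (T v)) \<in> A3"
    and T: "T \<in> op_closure X Y A1" and S: "S \<in> op_closure Y Z A2"
  shows "(\<lambda>v. S (T v)) \<in> op_closure X Z A3"
proof -
  have Tb: "bounded_op X Y T" and Sb: "bounded_op Y Z S"
    using T S op_closure_bounded by blast+
  define a where "a = opnorm Y Z S"
  define b where "b = opnorm X Y T"
  have a: "a \<ge> 0" and b: "b \<ge> 0"
    unfolding a_def b_def using opnorm_nonneg Tb Sb by blast+
  have "\<exists>R\<in>A3. opnorm X Z (\<lambda>v z. S (T v) z - R v z) < e" if "e > 0" for e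
  proof -
    define d where "d = min 1 (e / (a + b + 2))"
    have d: "d > 0" "d \<le> 1"
      using \<open>e > 0\<close> a b by (simp_all add: d_def)
    have "d \<le> e / (a + b + 2)"
      by (simp add: d_def)
    then have de: "d * (a + b + 2) \<le> e"
      using a b by (simp add: pos_le_divide_eq)
    obtain T' where T': "T' \<in> A1" "opnorm X Y (\<lambda>v y. T v y - T' v y) < d"
      using op_closure_approx[OF T d(1)] .
    obtain S' where S': "S' \<in> A2" "opnorm Y Z (\<lambda>w z. S w z - S' w z) < d"
      using op_closure_approx[OF S d(1)] .
    have "T' = (\<lambda>v y. 1 * T v y + (-1) * (T v y - T' v y))"
      by simp
    then have "opnorm X Y T' \<le> b + opnorm X Y (\<lambda>v y. T v y - T' v y)"
      using opnorm_lincomb_le[OF Tb bounded_op_minus[OF Tb A1[OF T'(1)]], of 1 "-1"]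
      by (simp add: b_def)
    with T'(2) have T'_norm: "opnorm X Y T' \<le> b + d"
      by simp
    have "opnorm X Z (\<lambda>v z. S (T v) z - S' (T' v) z)
        \<le> a * opnorm X Y (\<lambda>v y. T v y - T' v y) + opnorm Y Z (\<lambda>w z. S w z - S' w z) * opnorm X Y T'"
      unfolding a_def by (rule opnorm_compose_minus_le[OF Tb A1[OF T'(1)] Sb A2[OF S'(1)]])
    also have "\<dots> \<le> a * d + d * (b + d)"
      using T'(2) S'(2) T'_norm a d(1) opnorm_nonneg[OF A1[OF T'(1)]]
      by (intro add_mono mult_left_mono mult_mono) simp_all
    also have "\<dots> < d * (a + b + 2)"
      using d by (simp add: algebra_simps)
    also have "\<dots> \<le> e"
      by (rule de)
    finally show ?thesis
      using A3[OF T'(1) S'(1)] by (intro bexI[of _ "\<lambda>v. S' (T' v)"]) simp_all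
  qed
  then show ?thesis
    using bounded_op_compose[OF Tb Sb] by (simp add: op_closure_def)
qed

lemma op_closure_eq_hat_otimes:
  assumes A1: "\<And>T. T \<in> A1 \<Longrightarrow> bounded_op X Y T" and A2: "\<And>S. S \<in> A2 \<Longrightarrow> bounded_op Y Z S"
    and P: "op_subspace X Z P"
    and compose: "\<And>T S. T \<in> A1 \<Longrightarrow> S \<in> A2 \<Longrightarrow> (\<lambda>v. S (T v)) \<in> P"
    and decompose: "P \<subseteq> op_span {(\<lambda>v. S (T v)) | S T. T \<in> A1 \<and> S \<in> A2}"
  shows "op_closure X Z P = hat_otimes X Z (op_closure X Y A1) (op_closure Y Z A2)"
proof -
  define C where "C = {(\<lambda>v. S (T v)) | S T. T \<in> op_closure X Y A1 \<and> S \<in> op_closure Y Z A2}"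
  have P_bounded: "\<And>T. T \<in> P \<Longrightarrow> bounded_op X Z T"
    using P by (simp add: op_subspace_def)
  have "C \<subseteq> op_closure X Z P"
    unfolding C_def using op_closure_compose[OF A1 A2 compose] by blast
  then have "op_span C \<subseteq> op_closure X Z P"
    using op_span_mono op_span_subset_op_closure[OF P] by blast
  then have "op_closure X Z (op_span C) \<subseteq> op_closure X Z P"
    using op_closure_mono[of "op_span C" "op_closure X Z P" X Z] op_closure_idem[OF P_bounded]
    by simp
  moreover have "{(\<lambda>v. S (T v)) | S T. T \<in> A1 \<and> S \<in> A2} \<subseteq> C"
    unfolding C_def using subset_op_closure[OF A1] subset_op_closure[OF A2] by blast
  then have "op_closure X Z P \<subseteq> op_closure X Z (op_span C)"
    using op_span_mono decompose by (intro op_closure_mono) blast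
  ultimately show ?thesis
    unfolding hat_otimes_def C_def by blast
qed

lemma metric_on_nonneg: "metric_on S d \<Longrightarrow> x \<in> S \<Longrightarrow> y \<in> S \<Longrightarrow> 0 \<le> d x y"
  by (simp add: metric_on_def)

lemma metric_on_refl: "metric_on S d \<Longrightarrow> x \<in> S \<Longrightarrow> d x x = 0"
  by (simp add: metric_on_def)

lemma metric_on_triangle: "metric_on S d \<Longrightarrow> x \<in> S \<Longrightarrow> y \<in> S \<Longrightarrow> z \<in> S \<Longrightarrow> d x z \<le> d x y + d y z"
  unfolding metric_on_def by blast

lemma almost_isometry_pos: "almost_isometry X dX Y dY C f \<Longrightarrow> C > 0"
  by (simp add: almost_isometry_def)

lemma almost_isometry_image: "almost_isometry X dX Y dY C f \<Longrightarrow> x \<in> X \<Longrightarrow> f x \<in> Y"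
  by (auto simp: almost_isometry_def)

lemma almost_isometry_lower:
  "almost_isometry X dX Y dY C f \<Longrightarrow> x \<in> X \<Longrightarrow> x' \<in> X \<Longrightarrow> dX x x' - C \<le> dY (f x) (f x')"
  by (simp add: almost_isometry_def)

lemma almost_isometry_upper:
  "almost_isometry X dX Y dY C f \<Longrightarrow> x \<in> X \<Longrightarrow> x' \<in> X \<Longrightarrow> dY (f x) (f x') \<le> dX x x' + C"
  by (simp add: almost_isometry_def)

lemma dist_f_le:
  assumes mX: "metric_on X dX" and mY: "metric_on Y dY" and f: "almost_isometry X dX Y dY C f"
    and x: "x \<in> X" and x': "x' \<in> X" and y: "y \<in> Y"
  shows "dist_f X dX dY C f (Inl x) (Inr y) \<le> dX x x' + C / 2 + dY (f x') y"
proof -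
  have "bdd_below ((\<lambda>x'. dX x x' + C / 2 + dY (f x') y) ` X)"
    using metric_on_nonneg[OF mX x] metric_on_nonneg[OF mY almost_isometry_image[OF f] y]
      almost_isometry_pos[OF f]
    by (intro bdd_belowI2[where m=0]) (simp add: add_nonneg_nonneg)
  then show ?thesis
    unfolding dist_f.simps by (rule cINF_lower[OF _ x'])
qed

lemma dist_f_greaterI:
  assumes "x \<in> X" "\<And>x'. x' \<in> X \<Longrightarrow> B \<le> dX x x' + C / 2 + dY (f x') y"
  shows "B \<le> dist_f X dX dY C f (Inl x) (Inr y)"
  unfolding dist_f.simps by (rule cINF_greatest) (use assms in auto)

lemma dist_f_nonneg:
  assumes mX: "metric_on X dX" and mY: "metric_on Y dY" and f: "almost_isometry X dX Y dY C f"
    and x: "x \<in> X" and y: "y \<in> Y"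
  shows "0 \<le> dist_f X dX dY C f (Inl x) (Inr y)"
  using metric_on_nonneg[OF mX x] metric_on_nonneg[OF mY _ y] almost_isometry_image[OF f]
    almost_isometry_pos[OF f]
  by (intro dist_f_greaterI[OF x]) (simp add: add_nonneg_nonneg)

lemma dist_f_image_le:
  assumes mX: "metric_on X dX" and mY: "metric_on Y dY" and f: "almost_isometry X dX Y dY C f"
    and x: "x \<in> X"
  shows "dist_f X dX dY C f (Inl x) (Inr (f x)) \<le> C / 2"
  using dist_f_le[OF mX mY f x x almost_isometry_image[OF f x]]
    metric_on_refl[OF mX x] metric_on_refl[OF mY almost_isometry_image[OF f x]]
  by simp

lemma dist_f_ge:
  assumes mX: "metric_on X dX" and mY: "metric_on Y dY" and f: "almost_isometry X dX Y dY C f"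
    and x: "x \<in> X" and y: "y \<in> Y"
  shows "dY (f x) y - C / 2 \<le> dist_f X dX dY C f (Inl x) (Inr y)"
proof (rule dist_f_greaterI[OF x])
  fix x' assume x': "x' \<in> X"
  have "dY (f x) y \<le> dY (f x) (f x') + dY (f x') y"
    using metric_on_triangle[OF mY] almost_isometry_image[OF f] x x' y by blast
  with almost_isometry_upper[OF f x x'] show "dY (f x) y - C / 2 \<le> dX x x' + C / 2 + dY (f x') y"
    by simp
qed

definition finite_propagation_ops ::
  "'a set \<Rightarrow> 'b set \<Rightarrow> ('a + 'b \<Rightarrow> 'a + 'b \<Rightarrow> real) \<Rightarrow> (('a \<Rightarrow> complex) \<Rightarrow> ('b \<Rightarrow> complex)) set" where
  "finite_propagation_ops X Y d = {T. bounded_op X Y T \<and> finite_propagation X Y d T}"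

lemma M_d_eq_op_closure: "M_d X Y d = op_closure X Y (finite_propagation_ops X Y d)"
  by (simp add: M_d_def finite_propagation_ops_def)

lemma finite_propagationE:
  assumes "finite_propagation X Y d T"
  obtains L where "\<And>x y. x \<in> X \<Longrightarrow> y \<in> Y \<Longrightarrow> d (Inl x) (Inr y) \<ge> L \<Longrightarrow> T (delta x) y = 0"
  using assms unfolding finite_propagation_def by blast

lemma finite_propagation_mono_metric:
  assumes "\<And>x y. x \<in> X \<Longrightarrow> y \<in> Y \<Longrightarrow> d' (Inl x) (Inr y) \<le> d (Inl x) (Inr y) + c"
    and "finite_propagation X Y d T"
  shows "finite_propagation X Y d' T"
proof -
  obtain L where L: "\<And>x y. x \<in> X \<Longrightarrow> y \<in> Y \<Longrightarrow> d (Inl x) (Inr y) \<ge> L \<Longrightarrow> T (delta x) y = 0"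
    using finite_propagationE[OF assms(2)] by blast
  have "T (delta x) y = 0" if "x \<in> X" "y \<in> Y" "d' (Inl x) (Inr y) \<ge> L + c" for x y
    using L[OF that(1,2)] assms(1)[OF that(1,2)] that(3) by simp
  then show ?thesis
    unfolding finite_propagation_def by blast
qed

lemma finite_propagation_ops_cong:
  assumes "\<And>x y. x \<in> X \<Longrightarrow> y \<in> Y \<Longrightarrow> d' (Inl x) (Inr y) \<le> d (Inl x) (Inr y) + c"
    and "\<And>x y. x \<in> X \<Longrightarrow> y \<in> Y \<Longrightarrow> d (Inl x) (Inr y) \<le> d' (Inl x) (Inr y) + c'"
  shows "finite_propagation_ops X Y d = finite_propagation_ops X Y d'"
proof -
  have "finite_propagation X Y d T \<longleftrightarrow> finite_propagation X Y d' T" for T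
    using finite_propagation_mono_metric[of X Y d' d c T] finite_propagation_mono_metric[of X Y d d' c' T]
      assms by argo
  then show ?thesis
    by (simp add: finite_propagation_ops_def)
qed

lemma op_subspace_finite_propagation_ops: "op_subspace X Y (finite_propagation_ops X Y d)"
proof -
  have "finite_propagation X Y d (\<lambda>v y. a * T v y + b * S v y)"
    if T: "finite_propagation X Y d T" and S: "finite_propagation X Y d S" for T S a b
  proof -
    obtain L1 where "\<And>x y. x \<in> X \<Longrightarrow> y \<in> Y \<Longrightarrow> d (Inl x) (Inr y) \<ge> L1 \<Longrightarrow> T (delta x) y = 0"
      using finite_propagationE[OF T] by blast
    moreover obtain L2 where "\<And>x y. x \<in> X \<Longrightarrow> y \<in> Y \<Longrightarrow> d (Inl x) (Inr y) \<ge> L2 \<Longrightarrow> S (delta x) y = 0"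
      using finite_propagationE[OF S] by blast
    ultimately have "\<forall>x\<in>X. \<forall>y\<in>Y. d (Inl x) (Inr y) \<ge> max L1 L2 \<longrightarrow> a * T (delta x) y + b * S (delta x) y = 0"
      by simp
    then show ?thesis
      unfolding finite_propagation_def by blast
  qed
  moreover have "finite_propagation X Y d (\<lambda>v y. 0)"
    by (simp add: finite_propagation_def)
  ultimately show ?thesis
    unfolding op_subspace_def finite_propagation_ops_def
    by (simp add: bounded_op_zero bounded_op_lincomb)
qed

lemma M_d_dist_f_id:
  assumes mX: "metric_on X dX" and id: "almost_isometry X dX X dX C id"
  shows "M_d X X (dist_f X dX dX C id) = uniform_roe X dX"
proof -
  define d :: "'a + 'a \<Rightarrow> 'a + 'a \<Rightarrow> real" where "d a b = dX (projl a) (projr b)" for a b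
  have "uniform_roe X dX = M_d X X d"
    by (simp add: uniform_roe_def M_d_def finite_propagation_def d_def)
  moreover have "finite_propagation_ops X X (dist_f X dX dX C id) = finite_propagation_ops X X d"
  proof (rule finite_propagation_ops_cong)
    fix x x' assume "x \<in> X" "x' \<in> X"
    then show "d (Inl x) (Inr x') \<le> dist_f X dX dX C id (Inl x) (Inr x') + C / 2"
      and "dist_f X dX dX C id (Inl x) (Inr x') \<le> d (Inl x) (Inr x') + C / 2"
      using dist_f_ge[OF mX mX id \<open>x \<in> X\<close> \<open>x' \<in> X\<close>]
        dist_f_le[OF mX mX id \<open>x \<in> X\<close> \<open>x \<in> X\<close> \<open>x' \<in> X\<close>] metric_on_refl[OF mX \<open>x \<in> X\<close>]
      by (simp_all add: d_def)
  qed
  ultimately show ?thesis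
    by (simp add: M_d_eq_op_closure)
qed

lemma bounded_op_finite_expansion:
  assumes S: "bounded_op Y Z S" and F: "finite F" "F \<subseteq> Y" and c: "\<And>y. y \<notin> F \<Longrightarrow> c y = 0"
  shows "S c = (\<lambda>z. \<Sum>y\<in>F. c y * S (delta y) z)"
proof -
  have "(\<Sum>y\<in>F. c y * delta y y') = c y'" for y'
  proof -
    have "(\<Sum>y\<in>F. c y * delta y y') = (\<Sum>y\<in>F. if y' = y then c y else 0)"
      by (rule sum.cong) (simp_all add: delta_def)
    also have "\<dots> = (if y' \<in> F then c y' else 0)"
      using F(1) by (simp add: sum.delta)
    finally show ?thesis
      using c by auto
  qed
  then have "S c = S (\<lambda>y'. \<Sum>y\<in>F. c y * delta y y')"
    by simp
  also have "\<dots> = (\<lambda>z. \<Sum>y\<in>F. c y * S (delta y) z)"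
  proof (rule bounded_op_sum[OF S F(1)])
    fix y assume "y \<in> F"
    with F(2) show "delta y \<in> l2 Y"
      by (intro delta_l2) blast
  qed
  finally show ?thesis .
qed

locale almost_isometry_triple =
  fixes X :: "'a set" and Y :: "'b set" and Z :: "'c set"
    and dX :: "'a \<Rightarrow> 'a \<Rightarrow> real" and dY :: "'b \<Rightarrow> 'b \<Rightarrow> real" and dZ :: "'c \<Rightarrow> 'c \<Rightarrow> real"
    and f :: "'a \<Rightarrow> 'b" and g :: "'b \<Rightarrow> 'c" and Cf Cg Cgf :: real
  assumes mX: "metric_on X dX" and mY: "metric_on Y dY" and mZ: "metric_on Z dZ"
    and f: "almost_isometry X dX Y dY Cf f"
    and g: "almost_isometry Y dY Z dZ Cg g"
    and gf: "almost_isometry X dX Z dZ Cgf (g \<circ> f)"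
begin

abbreviation "df \<equiv> dist_f X dX dY Cf f"
abbreviation "dg \<equiv> dist_f Y dY dZ Cg g"
abbreviation "dgf \<equiv> dist_f X dX dZ Cgf (g \<circ> f)"
abbreviation "dg_df \<equiv> metric_comp Y df dg"

lemma constants_pos: "Cf > 0" "Cg > 0" "Cgf > 0"
  using almost_isometry_pos f g gf by blast+

lemma f_image: "x \<in> X \<Longrightarrow> f x \<in> Y"
  using almost_isometry_image[OF f] .

lemma g_image: "y \<in> Y \<Longrightarrow> g y \<in> Z"
  using almost_isometry_image[OF g] .

lemma metric_comp_le:
  assumes x: "x \<in> X" and y: "y \<in> Y" and z: "z \<in> Z"
  shows "dg_df (Inl x) (Inr z) \<le> df (Inl x) (Inr y) + dg (Inl y) (Inr z)"
proof -
  have "bdd_below ((\<lambda>y. df (Inl x) (Inr y) + dg (Inl y) (Inr z)) ` Y)"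
    using dist_f_nonneg[OF mX mY f x] dist_f_nonneg[OF mY mZ g _ z]
    by (intro bdd_belowI2[where m=0]) (simp add: add_nonneg_nonneg)
  then show ?thesis
    unfolding metric_comp.simps by (rule cINF_lower[OF _ y])
qed

lemma dist_g_image_le:
  assumes x: "x \<in> X" and z: "z \<in> Z"
  shows "dg (Inl (f x)) (Inr z) \<le> dgf (Inl x) (Inr z) + (Cf + Cg / 2)"
proof -
  have "dg (Inl (f x)) (Inr z) - (Cf + Cg / 2) \<le> dgf (Inl x) (Inr z)"
  proof (rule dist_f_greaterI[OF x])
    fix x' assume x': "x' \<in> X"
    have "dg (Inl (f x)) (Inr z) \<le> dY (f x) (f x') + Cg / 2 + dZ (g (f x')) z"
      by (rule dist_f_le[OF mY mZ g f_image[OF x] f_image[OF x'] z])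
    with almost_isometry_upper[OF f x x'] constants_pos
    show "dg (Inl (f x)) (Inr z) - (Cf + Cg / 2) \<le> dX x x' + Cgf / 2 + dZ ((g \<circ> f) x') z"
      by simp
  qed
  then show ?thesis
    by simp
qed

lemma metric_comp_le_dist_gf:
  assumes "x \<in> X" "z \<in> Z"
  shows "dg_df (Inl x) (Inr z) \<le> dgf (Inl x) (Inr z) + (Cf / 2 + Cf + Cg / 2)"
  using metric_comp_le[OF assms(1) f_image[OF assms(1)] assms(2)] dist_f_image_le[OF mX mY f assms(1)]
    dist_g_image_le[OF assms]
  by simp

lemma dist_gf_le_metric_comp:
  assumes x: "x \<in> X" and z: "z \<in> Z"
  shows "dgf (Inl x) (Inr z) \<le> dg_df (Inl x) (Inr z) + (Cgf / 2 + Cg / 2)"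
proof -
  let ?c = "Cgf / 2 + Cg / 2"
  have "dgf (Inl x) (Inr z) - ?c \<le> df (Inl x) (Inr y) + dg (Inl y) (Inr z)" if y: "y \<in> Y" for y
  proof -
    have "dgf (Inl x) (Inr z) - ?c - df (Inl x) (Inr y) \<le> dg (Inl y) (Inr z)"
    proof (rule dist_f_greaterI[OF y])
      fix y' assume y': "y' \<in> Y"
      have "dgf (Inl x) (Inr z) - ?c - (dY y y' + Cg / 2 + dZ (g y') z) \<le> df (Inl x) (Inr y)"
      proof (rule dist_f_greaterI[OF x])
        fix x' assume x': "x' \<in> X"
        have "dgf (Inl x) (Inr z) \<le> dX x x' + Cgf / 2 + dZ (g (f x')) z"
          using dist_f_le[OF mX mZ gf x x' z] by simp
        moreover have "dZ (g (f x')) z \<le> dZ (g (f x')) (g y') + dZ (g y') z"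
          using metric_on_triangle[OF mZ] g_image f_image x' y' z by blast
        moreover have "dZ (g (f x')) (g y') \<le> dY (f x') y' + Cg"
          by (rule almost_isometry_upper[OF g f_image[OF x'] y'])
        moreover have "dY (f x') y' \<le> dY (f x') y + dY y y'"
          using metric_on_triangle[OF mY] f_image x' y y' by blast
        ultimately show "dgf (Inl x) (Inr z) - ?c - (dY y y' + Cg / 2 + dZ (g y') z)
            \<le> dX x x' + Cf / 2 + dY (f x') y"
          using constants_pos by simp
      qed
      then show "dgf (Inl x) (Inr z) - ?c - df (Inl x) (Inr y) \<le> dY y y' + Cg / 2 + dZ (g y') z"
        by simp
    qed
    then show ?thesis
      by simp
  qed
  then have "dgf (Inl x) (Inr z) - ?c \<le> dg_df (Inl x) (Inr z)"
    unfolding metric_comp.simps using f_image[OF x] by (intro cINF_greatest) blast+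
  then show ?thesis
    by simp
qed

lemma finite_propagation_ops_metric_comp:
  "finite_propagation_ops X Z dg_df = finite_propagation_ops X Z dgf"
  by (rule finite_propagation_ops_cong[where d=dg_df and d'=dgf, OF dist_gf_le_metric_comp metric_comp_le_dist_gf])

end

section \<open>Splitting a map into injective pieces\<close>

text \<open>The position of \<open>x\<close> within its fibre, the fibre being ordered by the enumeration of \<open>X\<close>.\<close>

definition fibre_rank :: "'a set \<Rightarrow> ('a \<Rightarrow> 'b) \<Rightarrow> 'a \<Rightarrow> nat" where
  "fibre_rank X f x = card {x'\<in>X. f x' = f x \<and> to_nat_on X x' < to_nat_on X x}"

lemma fibre_rank_less_card:
  assumes "finite {x'\<in>X. f x' = f x}" "x \<in> X"
  shows "fibre_rank X f x < card {x'\<in>X. f x' = f x}"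
proof -
  have "{x'\<in>X. f x' = f x \<and> to_nat_on X x' < to_nat_on X x} \<subset> {x'\<in>X. f x' = f x}"
    using assms(2) by auto
  then show ?thesis
    unfolding fibre_rank_def by (rule psubset_card_mono[OF assms(1)])
qed

lemma inj_on_fibre_rank_level:
  assumes X: "countable X" and fibres: "\<And>x. x \<in> X \<Longrightarrow> finite {x'\<in>X. f x' = f x}"
  shows "inj_on f {x\<in>X. fibre_rank X f x = i}"
proof (rule inj_onI)
  have less: "fibre_rank X f x1 < fibre_rank X f x2"
    if "x1 \<in> X" "x2 \<in> X" "f x1 = f x2" "to_nat_on X x1 < to_nat_on X x2" for x1 x2
  proof -
    have "finite {x'\<in>X. f x' = f x2 \<and> to_nat_on X x' < to_nat_on X x2}"
      by (rule finite_subset[OF _ fibres[OF that(2)]]) blast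
    moreover have "{x'\<in>X. f x' = f x1 \<and> to_nat_on X x' < to_nat_on X x1}
        \<subset> {x'\<in>X. f x' = f x2 \<and> to_nat_on X x' < to_nat_on X x2}"
      using that by auto
    ultimately show ?thesis
      unfolding fibre_rank_def by (rule psubset_card_mono)
  qed
  fix x1 x2 assume "x1 \<in> {x\<in>X. fibre_rank X f x = i}" "x2 \<in> {x\<in>X. fibre_rank X f x = i}"
    and eq: "f x1 = f x2"
  then have r: "fibre_rank X f x1 = fibre_rank X f x2" "x1 \<in> X" "x2 \<in> X"
    by simp_all
  have "\<not> to_nat_on X x1 < to_nat_on X x2" "\<not> to_nat_on X x2 < to_nat_on X x1"
    using less[OF r(2,3) eq] less[OF r(3,2) eq[symmetric]] r(1) by auto
  then have "to_nat_on X x1 = to_nat_on X x2"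
    by simp
  then show "x1 = x2"
    using inj_on_to_nat_on[OF X] r(2,3) by (simp add: inj_on_eq_iff)
qed

lemma almost_isometry_fibres_bounded:
  assumes mY: "metric_on Y dY" and f: "almost_isometry X dX Y dY C f" and bg: "bounded_geometry X dX"
  obtains N where "\<And>x. x \<in> X \<Longrightarrow> finite {x'\<in>X. f x' = f x} \<and> card {x'\<in>X. f x' = f x} \<le> N"
proof -
  obtain N where N: "\<And>x. x \<in> X \<Longrightarrow> finite {x'\<in>X. dX x x' \<le> C} \<and> card {x'\<in>X. dX x x' \<le> C} \<le> N"
    using bg almost_isometry_pos[OF f] unfolding bounded_geometry_def by blast
  have fibre_in_ball: "{x'\<in>X. f x' = f x} \<subseteq> {x'\<in>X. dX x x' \<le> C}" if x: "x \<in> X" for x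
  proof
    fix x' assume "x' \<in> {x'\<in>X. f x' = f x}"
    then have x': "x' \<in> X" "f x' = f x"
      by simp_all
    have "dX x x' - C \<le> dY (f x) (f x')"
      by (rule almost_isometry_lower[OF f x x'(1)])
    also have "\<dots> = 0"
      using x'(2) metric_on_refl[OF mY almost_isometry_image[OF f x]] by simp
    finally show "x' \<in> {x'\<in>X. dX x x' \<le> C}"
      using x'(1) by simp
  qed
  show ?thesis
  proof (rule that)
    fix x assume x: "x \<in> X"
    have "finite {x'\<in>X. f x' = f x}"
      using finite_subset[OF fibre_in_ball[OF x]] N[OF x] by blast
    moreover have "card {x'\<in>X. f x' = f x} \<le> card {x'\<in>X. dX x x' \<le> C}"
      using card_mono[OF _ fibre_in_ball[OF x]] N[OF x] by blast
    ultimately show "finite {x'\<in>X. f x' = f x} \<and> card {x'\<in>X. f x' = f x} \<le> N"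
      using N[OF x] by simp
  qed
qed

definition pullback_op :: "'b set \<Rightarrow> 'a set \<Rightarrow> ('a \<Rightarrow> 'b) \<Rightarrow> ('b \<Rightarrow> complex) \<Rightarrow> 'a \<Rightarrow> complex" where
  "pullback_op Y A h w = (if w \<in> l2 Y then (\<lambda>x. if x \<in> A then w (h x) else 0) else (\<lambda>_. 0))"

lemma pullback_op_apply: "w \<in> l2 Y \<Longrightarrow> pullback_op Y A h w = (\<lambda>x. if x \<in> A then w (h x) else 0)"
  by (simp add: pullback_op_def)

lemma pullback_l2:
  assumes A: "A \<subseteq> X" and h: "inj_on h A" "h ` A \<subseteq> Y" and w: "w \<in> l2 Y"
  shows "(\<lambda>x. if x \<in> A then w (h x) else 0) \<in> l2 X"
    and "l2norm X (\<lambda>x. if x \<in> A then w (h x) else 0) \<le> l2norm Y w"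
proof -
  let ?q = "\<lambda>x. (cmod (if x \<in> A then w (h x) else 0))\<^sup>2"
  let ?p = "\<lambda>y. (cmod (w y))\<^sup>2"
  have p_summable: "?p summable_on h ` A"
    by (rule summable_on_subset_banach[OF l2_summable[OF w] h(2)])
  then have "(?p \<circ> h) summable_on A"
    using summable_on_reindex[OF h(1)] by blast
  then have "?q summable_on X"
    by (rule summable_on_cong_neutral[THEN iffD1, rotated -1]) (use A in auto)
  with A show "(\<lambda>x. if x \<in> A then w (h x) else 0) \<in> l2 X"
    unfolding l2_def by auto
  have "infsum ?q X = infsum (?p \<circ> h) A"
    by (rule infsum_cong_neutral) (use A in auto)
  also have "\<dots> = infsum ?p (h ` A)"
    by (rule infsum_reindex[OF h(1), symmetric])
  also have "\<dots> \<le> infsum ?p Y"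
    by (rule infsum_mono_neutral[OF p_summable l2_summable[OF w]]) (use h(2) in auto)
  finally show "l2norm X (\<lambda>x. if x \<in> A then w (h x) else 0) \<le> l2norm Y w"
    unfolding l2norm_def by simp
qed

lemma bounded_op_pullback_op:
  assumes A: "A \<subseteq> X" and h: "inj_on h A" "h ` A \<subseteq> Y"
  shows "bounded_op Y X (pullback_op Y A h)"
  unfolding bounded_op_def
proof (intro conjI ballI allI impI)
  fix w assume "w \<in> l2 Y"
  then show "pullback_op Y A h w \<in> l2 X"
    using pullback_l2(1)[OF A h] by (simp add: pullback_op_def)
next
  fix w assume "w \<notin> l2 Y"
  then show "pullback_op Y A h w = (\<lambda>_. 0)"
    by (simp add: pullback_op_def)
next
  fix u v a b assume "u \<in> l2 Y" "v \<in> l2 Y"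
  then show "pullback_op Y A h (\<lambda>x. a * u x + b * v x) = (\<lambda>y. a * pullback_op Y A h u y + b * pullback_op Y A h v y)"
    using l2_lincomb(1)[of u Y v a b] by (auto simp: pullback_op_def)
next
  have "l2norm X (pullback_op Y A h w) \<le> 1 * l2norm Y w" if "w \<in> l2 Y" for w
    using pullback_l2(2)[OF A h that] that by (simp add: pullback_op_def)
  then show "\<exists>K. \<forall>w\<in>l2 Y. l2norm X (pullback_op Y A h w) \<le> K * l2norm Y w"
    by blast
qed

lemma pullback_op_inverse:
  assumes A: "A \<subseteq> X" and h: "inj_on h A" "h ` A \<subseteq> Y" and v: "v \<in> l2 X"
  shows "pullback_op Y A h (pullback_op X (h ` A) (inv_into A h) v) = (\<lambda>x. if x \<in> A then v x else 0)"
proof -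
  have "inv_into A h ` h ` A \<subseteq> X"
    using inv_into_image_cancel[OF h(1) subset_refl] A by simp
  then have "pullback_op X (h ` A) (inv_into A h) v \<in> l2 Y"
    using bounded_op_l2[OF bounded_op_pullback_op[OF h(2) inj_on_inv_into] v] by blast
  then have "pullback_op Y A h (pullback_op X (h ` A) (inv_into A h) v)
      = (\<lambda>x. if x \<in> A then pullback_op X (h ` A) (inv_into A h) v (h x) else 0)"
    by (rule pullback_op_apply)
  also have "\<dots> = (\<lambda>x. if x \<in> A then v x else 0)"
    using v by (intro ext) (simp add: pullback_op_def inv_into_f_f[OF h(1)])
  finally show ?thesis .
qed

section \<open>Operators of finite propagation along a composite\<close>

locale almost_isometry_triple_bounded_geometry = almost_isometry_triple +
  assumes countable_X: "countable X"
    and bounded_geometry_X: "bounded_geometry X dX"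
    and bounded_geometry_Y: "bounded_geometry Y dY"
begin

lemma finite_propagation_delta_finite_support:
  assumes T: "T \<in> finite_propagation_ops X Y df" and x: "x \<in> X"
  shows "finite {y\<in>Y. T (delta x) y \<noteq> 0}"
proof -
  have "finite_propagation X Y df T"
    using T by (simp add: finite_propagation_ops_def)
  then obtain L where L: "\<And>x y. x \<in> X \<Longrightarrow> y \<in> Y \<Longrightarrow> df (Inl x) (Inr y) \<ge> L \<Longrightarrow> T (delta x) y = 0"
    using finite_propagationE by blast
  define R where "R = \<bar>L\<bar> + Cf"
  have "R > 0"
    using constants_pos by (simp add: R_def add_nonneg_pos)
  then have "finite {y\<in>Y. dY (f x) y \<le> R}"
    using bounded_geometry_Y f_image[OF x] unfolding bounded_geometry_def by blast
  moreover have "{y\<in>Y. T (delta x) y \<noteq> 0} \<subseteq> {y\<in>Y. dY (f x) y \<le> R}"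
  proof safe
    fix y assume y: "y \<in> Y" "T (delta x) y \<noteq> 0"
    then have "df (Inl x) (Inr y) < L"
      using L[OF x y(1)] by force
    with dist_f_ge[OF mX mY f x y(1)] constants_pos show "dY (f x) y \<le> R"
      by (simp add: R_def)
  qed
  ultimately show ?thesis
    by (rule finite_subset[rotated])
qed

lemma finite_propagation_compose:
  assumes T: "T \<in> finite_propagation_ops X Y df" and S: "S \<in> finite_propagation_ops Y Z dg"
  shows "(\<lambda>v. S (T v)) \<in> finite_propagation_ops X Z dgf"
proof -
  have Tb: "bounded_op X Y T" and Tfp: "finite_propagation X Y df T"
    and Sb: "bounded_op Y Z S" and Sfp: "finite_propagation Y Z dg S"
    using T S by (simp_all add: finite_propagation_ops_def)
  obtain L1 where L1: "\<And>x y. x \<in> X \<Longrightarrow> y \<in> Y \<Longrightarrow> df (Inl x) (Inr y) \<ge> L1 \<Longrightarrow> T (delta x) y = 0"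
    using finite_propagationE[OF Tfp] by blast
  obtain L2 where L2: "\<And>y z. y \<in> Y \<Longrightarrow> z \<in> Z \<Longrightarrow> dg (Inl y) (Inr z) \<ge> L2 \<Longrightarrow> S (delta y) z = 0"
    using finite_propagationE[OF Sfp] by blast
  have "S (T (delta x)) z = 0" if x: "x \<in> X" and z: "z \<in> Z" and far: "dg_df (Inl x) (Inr z) \<ge> L1 + L2"
    for x z
  proof -
    let ?F = "{y\<in>Y. T (delta x) y \<noteq> 0}"
    have "T (delta x) y = 0" if "y \<notin> ?F" for y
      using that l2_outside[OF bounded_op_l2[OF Tb delta_l2[OF x]]] by blast
    then have "S (T (delta x)) = (\<lambda>z. \<Sum>y\<in>?F. T (delta x) y * S (delta y) z)"
      using bounded_op_finite_expansion[OF Sb finite_propagation_delta_finite_support[OF T x]] by blast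
    moreover have "T (delta x) y * S (delta y) z = 0" if y: "y \<in> ?F" for y
    proof -
      have "df (Inl x) (Inr y) < L1"
        using y L1[OF x] by force
      then have "dg (Inl y) (Inr z) \<ge> L2"
        using metric_comp_le[OF x _ z, of y] far y by simp
      then show ?thesis
        using L2 y z by simp
    qed
    ultimately show ?thesis
      by simp
  qed
  then have "finite_propagation X Z dg_df (\<lambda>v. S (T v))"
    unfolding finite_propagation_def by blast
  then have "(\<lambda>v. S (T v)) \<in> finite_propagation_ops X Z dg_df"
    using bounded_op_compose[OF Tb Sb] by (simp add: finite_propagation_ops_def)
  then show ?thesis
    by (simp add: finite_propagation_ops_metric_comp)
qed

definition fibre_level :: "nat \<Rightarrow> 'a set" where
  "fibre_level i = {x\<in>X. fibre_rank X f x = i}"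

abbreviation push :: "nat \<Rightarrow> ('a \<Rightarrow> complex) \<Rightarrow> 'b \<Rightarrow> complex" where
  "push i \<equiv> pullback_op X (f ` fibre_level i) (inv_into (fibre_level i) f)"

abbreviation pull :: "nat \<Rightarrow> ('b \<Rightarrow> complex) \<Rightarrow> 'a \<Rightarrow> complex" where
  "pull i \<equiv> pullback_op Y (fibre_level i) f"

lemma fibre_level_subset: "fibre_level i \<subseteq> X"
  by (auto simp: fibre_level_def)

lemma fibres_bounded:
  obtains N where "\<And>x. x \<in> X \<Longrightarrow> finite {x'\<in>X. f x' = f x} \<and> card {x'\<in>X. f x' = f x} \<le> N"
  using almost_isometry_fibres_bounded[OF mY f bounded_geometry_X] by blast

lemma inj_on_fibre_level: "inj_on f (fibre_level i)"
proof -
  obtain N where "\<And>x. x \<in> X \<Longrightarrow> finite {x'\<in>X. f x' = f x} \<and> card {x'\<in>X. f x' = f x} \<le> N"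
    using fibres_bounded by blast
  then show ?thesis
    unfolding fibre_level_def by (intro inj_on_fibre_rank_level[OF countable_X]) simp
qed

lemma fibre_rank_bounded:
  obtains N where "\<And>x. x \<in> X \<Longrightarrow> fibre_rank X f x < N"
proof -
  obtain N where N: "\<And>x. x \<in> X \<Longrightarrow> finite {x'\<in>X. f x' = f x} \<and> card {x'\<in>X. f x' = f x} \<le> N"
    using fibres_bounded by blast
  have "fibre_rank X f x < N" if x: "x \<in> X" for x
  proof -
    have "finite {x'\<in>X. f x' = f x}" "card {x'\<in>X. f x' = f x} \<le> N"
      using N[OF x] by simp_all
    with fibre_rank_less_card[OF this(1) x] show ?thesis
      by linarith
  qed
  then show ?thesis
    by (rule that)
qed

lemma bounded_op_push: "bounded_op X Y (push i)"
proof (rule bounded_op_pullback_op)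
  show "f ` fibre_level i \<subseteq> Y"
    using fibre_level_subset f_image by blast
  show "inj_on (inv_into (fibre_level i) f) (f ` fibre_level i)"
    by (rule inj_on_inv_into) (rule subset_refl)
  show "inv_into (fibre_level i) f ` f ` fibre_level i \<subseteq> X"
    using inv_into_image_cancel[OF inj_on_fibre_level subset_refl] fibre_level_subset by simp
qed

lemma bounded_op_pull: "bounded_op Y X (pull i)"
proof (rule bounded_op_pullback_op[OF fibre_level_subset inj_on_fibre_level])
  show "f ` fibre_level i \<subseteq> Y"
    using fibre_level_subset f_image by blast
qed

lemma push_in_finite_propagation_ops: "push i \<in> finite_propagation_ops X Y df"
proof -
  have "push i (delta x) y = 0" if x: "x \<in> X" and y: "y \<in> Y" and far: "df (Inl x) (Inr y) \<ge> Cf" for x y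
  proof (rule ccontr)
    assume "push i (delta x) y \<noteq> 0"
    then have "y \<in> f ` fibre_level i" "delta x (inv_into (fibre_level i) f y) \<noteq> 0"
      by (simp_all add: pullback_op_apply[OF delta_l2[OF x]] split: if_splits)
    then have "y = f x"
      using f_inv_into_f[of y f "fibre_level i"] by (simp add: delta_def split: if_splits)
    then show False
      using dist_f_image_le[OF mX mY f x] far constants_pos by simp
  qed
  then have "finite_propagation X Y df (push i)"
    unfolding finite_propagation_def by blast
  then show ?thesis
    by (simp add: finite_propagation_ops_def bounded_op_push)
qed

lemma compose_pull_in_finite_propagation_ops:
  assumes P: "P \<in> finite_propagation_ops X Z dgf"
  shows "(\<lambda>w. P (pull i w)) \<in> finite_propagation_ops Y Z dg"
proof -
  have Pb: "bounded_op X Z P" and Pfp: "finite_propagation X Z dgf P"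
    using P by (simp_all add: finite_propagation_ops_def)
  obtain L where L: "\<And>x z. x \<in> X \<Longrightarrow> z \<in> Z \<Longrightarrow> dgf (Inl x) (Inr z) \<ge> L \<Longrightarrow> P (delta x) z = 0"
    using finite_propagationE[OF Pfp] by blast
  have "P (pull i (delta y)) z = 0"
    if y: "y \<in> Y" and z: "z \<in> Z" and far: "dg (Inl y) (Inr z) \<ge> L + (Cf + Cg / 2)" for y z
  proof (cases "\<exists>x\<in>fibre_level i. f x = y")
    case True
    then obtain x where x: "x \<in> fibre_level i" "f x = y"
      by blast
    then have xX: "x \<in> X"
      using fibre_level_subset by blast
    have "pull i (delta y) = delta x"
    proof
      fix x'
      have "pull i (delta y) x' = (if x' \<in> fibre_level i then delta y (f x') else 0)"
        by (simp add: pullback_op_apply[OF delta_l2[OF y]])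
      then show "pull i (delta y) x' = delta x x'"
        using inj_on_eq_iff[OF inj_on_fibre_level _ x(1)] x by (auto simp: delta_def)
    qed
    moreover have "dgf (Inl x) (Inr z) \<ge> L"
      using dist_g_image_le[OF xX z] x(2) far by simp
    ultimately show ?thesis
      using L[OF xX z] by simp
  next
    case False
    then have "pull i (delta y) = (\<lambda>_. 0)"
      unfolding pullback_op_apply[OF delta_l2[OF y]] by (auto simp: delta_def)
    then show ?thesis
      using bounded_op_apply_zero[OF Pb] by simp
  qed
  then have "finite_propagation Y Z dg (\<lambda>w. P (pull i w))"
    unfolding finite_propagation_def by blast
  then show ?thesis
    using bounded_op_compose[OF bounded_op_pull Pb] by (simp add: finite_propagation_ops_def)
qed

lemma sum_pull_push:
  assumes N: "\<And>x. x \<in> X \<Longrightarrow> fibre_rank X f x < N" and v: "v \<in> l2 X"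
  shows "(\<lambda>x. \<Sum>i<N. 1 * pull i (push i v) x) = v"
proof
  fix x
  have "pull i (push i v) = (\<lambda>x. if x \<in> fibre_level i then v x else 0)" for i
  proof (rule pullback_op_inverse[OF fibre_level_subset inj_on_fibre_level _ v])
    show "f ` fibre_level i \<subseteq> Y"
      using fibre_level_subset f_image by blast
  qed
  then have "(\<Sum>i<N. 1 * pull i (push i v) x) = (\<Sum>i<N. if x \<in> fibre_level i then v x else 0)"
    by simp
  also have "\<dots> = v x"
  proof (cases "x \<in> X")
    case True
    then have "(\<Sum>i<N. if x \<in> fibre_level i then v x else 0) = (\<Sum>i<N. if i = fibre_rank X f x then v x else 0)"
      by (intro sum.cong) (auto simp: fibre_level_def)
    with N[OF True] show ?thesis
      by simp
  next
    case False
    then show ?thesis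
      using l2_outside[OF v False] by (simp cong: if_cong)
  qed
  finally show "(\<Sum>i<N. 1 * pull i (push i v) x) = v x" .
qed

lemma finite_propagation_ops_decompose:
  assumes P: "P \<in> finite_propagation_ops X Z dgf"
  shows "P \<in> op_span {(\<lambda>v. S (T v)) | S T. T \<in> finite_propagation_ops X Y df \<and> S \<in> finite_propagation_ops Y Z dg}"
proof -
  have Pb: "bounded_op X Z P"
    using P by (simp add: finite_propagation_ops_def)
  obtain N where N: "\<And>x. x \<in> X \<Longrightarrow> fibre_rank X f x < N"
    using fibre_rank_bounded by blast
  have decomposition: "P = (\<lambda>v z. \<Sum>i<N. 1 * P (pull i (push i v)) z)"
  proof
    fix v
    show "P v = (\<lambda>z. \<Sum>i<N. 1 * P (pull i (push i v)) z)"
    proof (cases "v \<in> l2 X")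
      case True
      have "P v = P (\<lambda>x. \<Sum>i<N. 1 * pull i (push i v) x)"
        using sum_pull_push[OF N True] by simp
      also have "\<dots> = (\<lambda>z. \<Sum>i<N. 1 * P (pull i (push i v)) z)"
      proof (rule bounded_op_sum[OF Pb finite_lessThan, where u="\<lambda>i. pull i (push i v)"])
        fix i
        show "pull i (push i v) \<in> l2 X"
          by (rule bounded_op_l2[OF bounded_op_pull bounded_op_l2[OF bounded_op_push True]])
      qed
      finally show ?thesis .
    next
      case False
      then show ?thesis
        using bounded_op_outside[OF Pb] bounded_op_outside[OF bounded_op_push]
          bounded_op_apply_zero[OF bounded_op_pull] bounded_op_apply_zero[OF Pb]
        by simp
    qed
  qed
  have factors: "(\<lambda>v. P (pull i (push i v)))
      \<in> {(\<lambda>v. S (T v)) | S T. T \<in> finite_propagation_ops X Y df \<and> S \<in> finite_propagation_ops Y Z dg}"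
    for i
    unfolding mem_Collect_eq
    by (intro exI[of _ "\<lambda>w. P (pull i w)"] exI[of _ "push i"] conjI refl
        push_in_finite_propagation_ops compose_pull_in_finite_propagation_ops[OF P])
  show ?thesis
    unfolding op_span_def
    by (intro CollectI exI[of _ N] exI[of _ "\<lambda>_. 1"] exI[of _ "\<lambda>i v. P (pull i (push i v))"]
        conjI allI impI factors decomposition)
qed

lemma M_d_dist_gf_eq_hat_otimes: "M_d X Z dgf = hat_otimes X Z (M_d X Y df) (M_d Y Z dg)"
  unfolding M_d_eq_op_closure
proof (rule op_closure_eq_hat_otimes[OF _ _ op_subspace_finite_propagation_ops finite_propagation_compose])
  show "finite_propagation_ops X Z dgf
      \<subseteq> op_span {(\<lambda>v. S (T v)) | S T. T \<in> finite_propagation_ops X Y df \<and> S \<in> finite_propagation_ops Y Z dg}"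
    using finite_propagation_ops_decompose by blast
qed (simp_all add: finite_propagation_ops_def)

end

theorem theorem3p3:
  fixes X :: "'a set" and Y :: "'b set" and Z :: "'c set"
    and dX :: "'a \<Rightarrow> 'a \<Rightarrow> real" and dY :: "'b \<Rightarrow> 'b \<Rightarrow> real" and dZ :: "'c \<Rightarrow> 'c \<Rightarrow> real"
    and f :: "'a \<Rightarrow> 'b" and g :: "'b \<Rightarrow> 'c"
    and Cf Cg Cgf Cid :: real
  assumes X: "countable_discrete_metric X dX" "bounded_geometry X dX"
    and Y: "countable_discrete_metric Y dY" "bounded_geometry Y dY"
    and Z: "countable_discrete_metric Z dZ" "bounded_geometry Z dZ"
    and f: "almost_isometry X dX Y dY Cf f"
    and g: "almost_isometry Y dY Z dZ Cg g"
    and gf: "almost_isometry X dX Z dZ Cgf (g \<circ> f)"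
    and id: "almost_isometry X dX X dX Cid id"
  shows "M_d X Z (dist_f X dX dZ Cgf (g \<circ> f))
           = hat_otimes X Z (M_d X Y (dist_f X dX dY Cf f)) (M_d Y Z (dist_f Y dY dZ Cg g))
       \<and> hat_otimes X Z (M_d X Y (dist_f X dX dY Cf f)) (M_d Y Z (dist_f Y dY dZ Cg g))
           = M_d X Z (metric_comp Y (dist_f X dX dY Cf f) (dist_f Y dY dZ Cg g))
       \<and> M_d X X (dist_f X dX dX Cid id) = uniform_roe X dX"
proof -
  interpret almost_isometry_triple_bounded_geometry X Y Z dX dY dZ f g Cf Cg Cgf
    using X Y Z f g gf by unfold_locales (simp_all add: countable_discrete_metric_def)
  have "M_d X Z (metric_comp Y (dist_f X dX dY Cf f) (dist_f Y dY dZ Cg g))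
      = M_d X Z (dist_f X dX dZ Cgf (g \<circ> f))"
    by (simp add: M_d_eq_op_closure finite_propagation_ops_metric_comp)
  with M_d_dist_gf_eq_hat_otimes M_d_dist_f_id[OF mX id] show ?thesis
    by simp
qed

end
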